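(* For complex numbers $x_1,\dots,x_M$ and $y_1,\dots,y_N$ with $N>M$ (pairwise distinct within each family and $x_a\ne y_b$), one has $\mathcal A^\pm_{\{y\}}\!\left[E^\mp_{\{x\}}\right]=0$.
   Context: Let $\eta\in\mathbb C\setminus\{0\}$. For a family $\{x\}=\{x_1,\dots,x_M\}$ and $y\in\mathbb C$, $E^\pm_{\{x\}}(y)=\prod_{n=1}^M\frac{y-x_n\pm\eta}{y-x_n}$. With $V(y_1,\dots,y_N)=\prod_{1\le b<a\le N}(y_a-y_b)$, for pairwise distinct $y_a$ and a function $f$ defined there, $\mathcal A^\pm_{\{y\}}[f]=\det_{1\le a,b\le N}[y_a^{b-1}-f(y_a)(y_a\pm\eta)^{b-1}]/V(y_1,\dots,y_N)$. *)

theory Defs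
  imports Complex_Main "Jordan_Normal_Form.Determinant"
begin

text \<open>Families are lists; the sign parameter s is 1 for "+" and -1 for "-".
  E s eta xs y = prod over n of (y - x_n + s*eta)/(y - x_n).\<close>
definition E_fam :: "complex \<Rightarrow> complex \<Rightarrow> complex list \<Rightarrow> complex \<Rightarrow> complex" where
  "E_fam s eta xs y = (\<Prod>n<length xs. (y - xs ! n + s * eta) / (y - xs ! n))"

definition Vdm :: "complex list \<Rightarrow> complex" where
  "Vdm ys = (\<Prod>a<length ys. \<Prod>b<a. ys ! a - ys ! b)"

definition A_op :: "complex \<Rightarrow> complex \<Rightarrow> complex list \<Rightarrow> (complex \<Rightarrow> complex) \<Rightarrow> complex" where
  "A_op s eta ys f =
     det (mat (length ys) (length ys)
       (\<lambda>(a, b). ys ! a ^ b - f (ys ! a) * (ys ! a + s * eta) ^ b)) / Vdm ys"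

end

theory Submission
  imports Defs
begin

text \<open>The coefficient vector of a polynomial p of degree below N is sent by the matrix
  with rows (u^b - w * v^b) for b < N to the values p(u) - w * p(v). The polynomial
  p(z) = prod_n (z - x_n - s eta) has degree M < N and satisfies E^(-s)(y) p(y + s eta) = p(y),
  so its nonzero coefficient vector lies in the kernel and the determinant vanishes.\<close>

lemma poly_eq_sum_lessThan:
  fixes p :: "'a::comm_semiring_1 poly"
  assumes "degree p < N"
  shows "poly p x = (\<Sum>b<N. coeff p b * x ^ b)"
proof -
  have "poly p x = (\<Sum>i\<le>degree p. coeff p i * x ^ i)" by (rule poly_altdef)
  also have "\<dots> = (\<Sum>b<N. coeff p b * x ^ b)"
    by (rule sum.mono_neutral_left) (use assms in \<open>auto simp: coeff_eq_0\<close>)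
  finally show ?thesis .
qed

lemma det_power_difference_mat_eq_0:
  fixes p :: "'a::idom poly" and u v w :: "nat \<Rightarrow> 'a"
  assumes "p \<noteq> 0" and "degree p < N"
    and "\<And>a. a < N \<Longrightarrow> poly p (u a) = w a * poly p (v a)"
  shows "det (mat N N (\<lambda>(a, b). u a ^ b - w a * v a ^ b)) = 0"
proof -
  define A where "A = mat N N (\<lambda>(a, b). u a ^ b - w a * v a ^ b)"
  define c where "c = vec N (coeff p)"
  have "c \<noteq> 0\<^sub>v N"
  proof
    assume "c = 0\<^sub>v N"
    then have "c $ degree p = 0" using assms(2) by simp
    with assms(1,2) show False unfolding c_def by simp
  qed
  moreover have "A *\<^sub>v c = 0\<^sub>v N"
  proof (rule eq_vecI)
    fix a assume "a < dim_vec (0\<^sub>v N :: 'a vec)"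
    then have a: "a < N" by simp
    have "(A *\<^sub>v c) $ a = (\<Sum>b<N. (u a ^ b - w a * v a ^ b) * coeff p b)"
      using a unfolding A_def c_def
      by (simp add: mult_mat_vec_def scalar_prod_def lessThan_atLeast0)
    also have "\<dots> = (\<Sum>b<N. coeff p b * u a ^ b) - w a * (\<Sum>b<N. coeff p b * v a ^ b)"
      by (simp add: algebra_simps sum_subtractf sum_distrib_left)
    also have "\<dots> = poly p (u a) - w a * poly p (v a)"
      using assms(2) by (simp add: poly_eq_sum_lessThan)
    also have "\<dots> = 0" using assms(3)[OF a] by simp
    finally show "(A *\<^sub>v c) $ a = 0\<^sub>v N $ a" using a by simp
  qed (simp add: A_def)
  moreover have "A \<in> carrier_mat N N" "c \<in> carrier_vec N"
    unfolding A_def c_def by simp_all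
  ultimately show ?thesis
    using det_0_iff_vec_prod_zero unfolding A_def by blast
qed

lemma degree_shifted_root_poly:
  fixes xs :: "'a::idom list"
  shows "degree (\<Prod>n<length xs. [:- (xs ! n) - t, 1:]) = length xs"
  by (subst degree_prod_eq_sum_degree) auto

lemma shifted_root_poly_neq_0:
  fixes xs :: "'a::idom list"
  shows "(\<Prod>n<length xs. [:- (xs ! n) - t, 1:]) \<noteq> 0"
  by (subst prod_zero_iff) auto

lemma E_fam_times_shifted_root_poly:
  fixes xs :: "complex list"
  assumes "y \<notin> set xs"
  shows "poly (\<Prod>n<length xs. [:- (xs ! n) - s * eta, 1:]) y
    = E_fam (- s) eta xs y * poly (\<Prod>n<length xs. [:- (xs ! n) - s * eta, 1:]) (y + s * eta)"
proof -
  have "(\<Prod>n<length xs. y - xs ! n) \<noteq> 0"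
    using assms by (auto simp: prod_zero_iff)
  then show ?thesis
    unfolding E_fam_def by (simp add: poly_prod prod_dividef algebra_simps)
qed

theorem corollary2:
  fixes eta :: complex and xs ys :: "complex list" and s :: complex
  assumes "eta \<noteq> 0"
    and "s \<in> {1, -1}"
    and "distinct xs" and "distinct ys"
    and "set xs \<inter> set ys = {}"
    and "length ys > length xs"
  shows "A_op s eta ys (E_fam (- s) eta xs) = 0"
proof -
  let ?p = "\<Prod>n<length xs. [:- (xs ! n) - s * eta, 1:]"
  have "poly ?p (ys ! a) = E_fam (- s) eta xs (ys ! a) * poly ?p (ys ! a + s * eta)"
    if "a < length ys" for a
    using that assms(5) by (intro E_fam_times_shifted_root_poly) auto
  then have "det (mat (length ys) (length ys) (\<lambda>(a, b).
      ys ! a ^ b - E_fam (- s) eta xs (ys ! a) * (ys ! a + s * eta) ^ b)) = 0"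
    using assms(6)
    by (intro det_power_difference_mat_eq_0[where p = ?p])
      (auto simp: shifted_root_poly_neq_0 degree_shifted_root_poly)
  then show ?thesis unfolding A_op_def by simp
qed

end
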